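(* Let $(\Omega,c)$ be a network with states $a,x,z\in\Omega$ such that $c(u,z)=0$ for all $u\notin\{x,z\}$. Let $x=x_0,x_1,\dots,x_k=a$ be any sequence of states such that there is some $\rho>0$ for which $c(x_{i-1},x_i)\ge\rho^{-1}c(x,z)$ for $i=1,\dots,k$. Then, for the Markov chain $(X_t)$ associated with the network, $$\mathbb P\{\tau_a<\tau_z\mid X_0=x\}\ge\frac{1}{k\rho+1}.$$
   Context: A network $(\Omega,c)$ consists of a finite state space $\Omega$ and a symmetric function $c:\Omega\times\Omega\to\mathbb R_{\ge0}$ (the conductance). Its associated Markov chain has transition probabilities $P(u,v)=c(u,v)/\sum_{w\in\Omega}c(u,w)$. For a state $s$, $\tau_s=\min\{t\ge0: X_t=s\}$. *)

theory Defs
  imports Complex_Main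
begin

definition network :: "('a::finite \<Rightarrow> 'a \<Rightarrow> real) \<Rightarrow> bool" where
  "network c \<longleftrightarrow> (\<forall>u v. c u v = c v u) \<and> (\<forall>u v. 0 \<le> c u v)"

definition trans_prob :: "('a::finite \<Rightarrow> 'a \<Rightarrow> real) \<Rightarrow> 'a \<Rightarrow> 'a \<Rightarrow> real" where
  "trans_prob c u v = c u v / (\<Sum>w\<in>UNIV. c u w)"

text \<open>Probability, started at x, of the event {tau_a = n and tau_z > n}:
  sum over trajectories X_0..X_n (lists of length n+1) with X_0 = x, X_n = a,
  X_i \<noteq> a for i < n and X_i \<noteq> z for i \<le> n, of the product of transition probabilities.\<close>
definition hit_before_at :: "('a::finite \<Rightarrow> 'a \<Rightarrow> real) \<Rightarrow> 'a \<Rightarrow> 'a \<Rightarrow> 'a \<Rightarrow> nat \<Rightarrow> real" where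
  "hit_before_at c x a z n =
     (\<Sum>p\<in>{p :: 'a list. length p = Suc n \<and> p ! 0 = x \<and> p ! n = a
              \<and> (\<forall>i<n. p ! i \<noteq> a) \<and> (\<forall>i\<le>n. p ! i \<noteq> z)}.
        \<Prod>i<n. trans_prob c (p ! i) (p ! Suc i))"

text \<open>P{tau_a < tau_z | X_0 = x}, as the sum over n of P{tau_a = n < tau_z}.\<close>
definition hit_before :: "('a::finite \<Rightarrow> 'a \<Rightarrow> real) \<Rightarrow> 'a \<Rightarrow> 'a \<Rightarrow> 'a \<Rightarrow> real" where
  "hit_before c x a z = (\<Sum>n. hit_before_at c x a z n)"

end

theory Submission
  imports Defs "HOL-Analysis.Convex"
begin

text \<open>Let \<open>h u\<close> be the probability of hitting \<open>a\<close> before \<open>z\<close> from \<open>u\<close>. By first-step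
  analysis \<open>h\<close> is harmonic off \<open>{a, z}\<close>, with \<open>h a = 1\<close> and \<open>h z = 0\<close>. Green's identity
  then expresses the Dirichlet energy of \<open>h\<close> (summed over unordered edges) as the current
  flowing into \<open>z\<close>, which is \<open>c(x,z) h(x)\<close> because \<open>x\<close> is the only neighbour of \<open>z\<close>.
  On the other hand, after shortcutting the path \<open>x = x\<^sub>0, \<dots>, x\<^sub>k = a\<close> to an injective one
  (which only makes it shorter), its edges and the edge \<open>{x, z}\<close> are pairwise distinct,
  so the energy is at least \<open>c(x,z) h(x)\<^sup>2 + (c(x,z)/\<rho>) D\<close> with
  \<open>D = (\<Sum>i<k. (h (xs (Suc i)) - h (xs i))\<^sup>2)\<close>, and by Cauchy-Schwarz \<open>D \<ge> (1 - h x)\<^sup>2 / k\<close>.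
  Comparing both expressions gives \<open>(1 - h x)\<^sup>2 \<le> k \<rho> h(x) (1 - h x)\<close>, i.e. \<open>h x \<ge> 1 / (k \<rho> + 1)\<close>.\<close>

section \<open>First-step analysis of the hitting probability\<close>

definition first_passage_paths :: "'a \<Rightarrow> 'a \<Rightarrow> 'a \<Rightarrow> nat \<Rightarrow> 'a list set" where
  "first_passage_paths u a z n = {p. length p = Suc n \<and> p ! 0 = u \<and> p ! n = a
     \<and> (\<forall>i<n. p ! i \<noteq> a) \<and> (\<forall>i\<le>n. p ! i \<noteq> z)}"

lemma hit_before_at_eq_sum_paths:
  "hit_before_at c u a z n =
     (\<Sum>p\<in>first_passage_paths u a z n. \<Prod>i<n. trans_prob c (p ! i) (p ! Suc i))"
  unfolding hit_before_at_def first_passage_paths_def ..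

lemma finite_first_passage_paths: "finite (first_passage_paths (u::'a::finite) a z n)"
  by (rule finite_subset[OF _ finite_lists_length_eq[of UNIV "Suc n"]])
     (auto simp: first_passage_paths_def)

lemma first_passage_paths_0:
  "a \<noteq> z \<Longrightarrow> first_passage_paths u a z 0 = (if u = a then {[a]} else {})"
  by (auto simp: first_passage_paths_def length_Suc_conv)

lemma Cons_in_first_passage_paths_Suc:
  "u # q \<in> first_passage_paths w a z (Suc n) \<longleftrightarrow>
     u = w \<and> u \<noteq> a \<and> u \<noteq> z \<and> q \<in> first_passage_paths (q ! 0) a z n"
  unfolding first_passage_paths_def
  by (auto simp: All_less_Suc2 simp flip: less_Suc_eq_le)

lemma first_passage_paths_Suc:
  assumes "u \<noteq> a" "u \<noteq> z"
  shows "first_passage_paths u a z (Suc n) = Cons u ` (\<Union>v. first_passage_paths v a z n)"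
proof (intro equalityI subsetI)
  fix p assume p: "p \<in> first_passage_paths u a z (Suc n)"
  then have "length p = Suc (Suc n)" "p ! 0 = u"
    by (simp_all add: first_passage_paths_def)
  then obtain q where q: "p = u # q"
    by (cases p) auto
  with p have "q \<in> first_passage_paths (q ! 0) a z n"
    by (simp add: Cons_in_first_passage_paths_Suc)
  with q show "p \<in> Cons u ` (\<Union>v. first_passage_paths v a z n)"
    by blast
next
  fix p assume "p \<in> Cons u ` (\<Union>v. first_passage_paths v a z n)"
  then obtain v q where "p = u # q" "q \<in> first_passage_paths v a z n"
    by blast
  moreover from this have "q ! 0 = v"
    by (simp add: first_passage_paths_def)
  ultimately show "p \<in> first_passage_paths u a z (Suc n)"
    using assms by (simp add: Cons_in_first_passage_paths_Suc)
qed

lemma first_passage_paths_Suc_stopped: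
  "u = a \<or> u = z \<Longrightarrow> first_passage_paths u a z (Suc n) = {}"
  by (auto simp: first_passage_paths_def)

lemma hit_before_at_0:
  "a \<noteq> z \<Longrightarrow> hit_before_at c u a z 0 = (if u = a then 1 else 0)"
  by (simp add: hit_before_at_eq_sum_paths first_passage_paths_0)

lemma hit_before_at_Suc:
  fixes c :: "'a::finite \<Rightarrow> 'a \<Rightarrow> real"
  shows "hit_before_at c u a z (Suc n) =
    (if u = a \<or> u = z then 0 else (\<Sum>v\<in>UNIV. trans_prob c u v * hit_before_at c v a z n))"
proof (cases "u = a \<or> u = z")
  case True
  then show ?thesis
    by (simp add: hit_before_at_eq_sum_paths first_passage_paths_Suc_stopped)
next
  case False
  then have running: "u \<noteq> a" "u \<noteq> z"
    by auto
  let ?P = "\<lambda>v. first_passage_paths v a z n"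
  let ?w = "\<lambda>p. \<Prod>i<n. trans_prob c (p ! i) (p ! Suc i)"
  have disjoint: "?P v \<inter> ?P w = {}" if "v \<noteq> w" for v w
    using that by (auto simp: first_passage_paths_def)
  have "hit_before_at c u a z (Suc n) =
      (\<Sum>q\<in>(\<Union>v. ?P v). \<Prod>i<Suc n. trans_prob c ((u # q) ! i) ((u # q) ! Suc i))"
    unfolding hit_before_at_eq_sum_paths first_passage_paths_Suc[OF running]
    by (simp add: sum.reindex)
  also have "\<dots> = (\<Sum>q\<in>(\<Union>v. ?P v). trans_prob c u (q ! 0) * ?w q)"
    by (simp only: prod.lessThan_Suc_shift nth_Cons_0 nth_Cons_Suc)
  also have "\<dots> = (\<Sum>v\<in>UNIV. \<Sum>q\<in>?P v. trans_prob c u (q ! 0) * ?w q)"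
    by (rule sum.UNION_disjoint) (auto simp: finite_first_passage_paths disjoint)
  also have "\<dots> = (\<Sum>v\<in>UNIV. \<Sum>q\<in>?P v. trans_prob c u v * ?w q)"
    by (intro sum.cong refl) (simp add: first_passage_paths_def)
  also have "\<dots> = (\<Sum>v\<in>UNIV. trans_prob c u v * hit_before_at c v a z n)"
    by (simp add: hit_before_at_eq_sum_paths sum_distrib_left)
  finally show ?thesis
    using False by simp
qed

lemma trans_prob_nonneg: "network c \<Longrightarrow> 0 \<le> trans_prob c u v"
  by (simp add: network_def trans_prob_def sum_nonneg)

lemma sum_trans_prob_le_1: "(\<Sum>v\<in>UNIV. trans_prob c u v) \<le> 1"
  by (simp add: trans_prob_def flip: sum_divide_distrib)

lemma hit_before_at_nonneg: "network c \<Longrightarrow> 0 \<le> hit_before_at c u a z n"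
  unfolding hit_before_at_eq_sum_paths by (intro sum_nonneg prod_nonneg trans_prob_nonneg)

lemma sum_hit_before_at_lessThan_Suc:
  fixes c :: "'a::finite \<Rightarrow> 'a \<Rightarrow> real"
  assumes "a \<noteq> z"
  shows "(\<Sum>n<Suc N. hit_before_at c u a z n) =
    (if u = a then 1 else if u = z then 0
     else (\<Sum>v\<in>UNIV. trans_prob c u v * (\<Sum>n<N. hit_before_at c v a z n)))"
  using assms
  by (simp add: sum.lessThan_Suc_shift hit_before_at_0 hit_before_at_Suc sum_distrib_left
      sum.swap[of _ "{..<N}"] del: sum.lessThan_Suc)

lemma sum_hit_before_at_le_1:
  fixes c :: "'a::finite \<Rightarrow> 'a \<Rightarrow> real"
  assumes "network c" "a \<noteq> z"
  shows "(\<Sum>n<N. hit_before_at c u a z n) \<le> 1"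
proof (induction N arbitrary: u)
  case 0
  then show ?case by simp
next
  case (Suc N)
  have "(\<Sum>v\<in>UNIV. trans_prob c u v * (\<Sum>n<N. hit_before_at c v a z n)) \<le> (\<Sum>v\<in>UNIV. trans_prob c u v)"
    using assms(1) Suc.IH
    by (intro sum_mono mult_right_le_one_le trans_prob_nonneg sum_nonneg hit_before_at_nonneg)
  also have "\<dots> \<le> 1"
    by (rule sum_trans_prob_le_1)
  finally show ?case
    using assms(2) by (simp add: sum_hit_before_at_lessThan_Suc del: sum.lessThan_Suc)
qed

lemma summable_hit_before_at:
  fixes c :: "'a::finite \<Rightarrow> 'a \<Rightarrow> real"
  assumes "network c" "a \<noteq> z"
  shows "summable (hit_before_at c u a z)"
  using assms hit_before_at_nonneg sum_hit_before_at_le_1 by (blast intro: summableI_nonneg_bounded)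

lemma hit_before_le_1:
  fixes c :: "'a::finite \<Rightarrow> 'a \<Rightarrow> real"
  assumes "network c" "a \<noteq> z"
  shows "hit_before c u a z \<le> 1"
  unfolding hit_before_def
  using assms by (intro suminf_le_const summable_hit_before_at sum_hit_before_at_le_1)

lemma hit_before_first_step:
  fixes c :: "'a::finite \<Rightarrow> 'a \<Rightarrow> real"
  assumes "network c" "a \<noteq> z"
  shows "hit_before c u a z =
    (if u = a then 1 else if u = z then 0
     else (\<Sum>v\<in>UNIV. trans_prob c u v * hit_before c v a z))"
proof -
  have partial_sums: "(\<lambda>N. \<Sum>n<N. hit_before_at c w a z n) \<longlonglongrightarrow> hit_before c w a z" for w
    unfolding hit_before_def using assms by (intro summable_LIMSEQ summable_hit_before_at)
  have "(\<lambda>N. \<Sum>n<Suc N. hit_before_at c u a z n) \<longlonglongrightarrow>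
      (if u = a then 1 else if u = z then 0
       else (\<Sum>v\<in>UNIV. trans_prob c u v * hit_before c v a z))"
    unfolding sum_hit_before_at_lessThan_Suc[OF assms(2)]
    by (auto intro!: tendsto_sum tendsto_mult_left partial_sums)
  moreover have "(\<lambda>N. \<Sum>n<Suc N. hit_before_at c u a z n) \<longlonglongrightarrow> hit_before c u a z"
    using LIMSEQ_Suc[OF partial_sums] by simp
  ultimately show ?thesis
    using LIMSEQ_unique by auto
qed

section \<open>Dirichlet energy of harmonic functions\<close>

definition net_current :: "('a::finite \<Rightarrow> 'a \<Rightarrow> real) \<Rightarrow> ('a \<Rightarrow> real) \<Rightarrow> 'a \<Rightarrow> real" where
  "net_current c h u = (\<Sum>v\<in>UNIV. c u v * (h u - h v))"

text \<open>The sum runs over ordered pairs, so this is twice the usual energy.\<close>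

definition dirichlet_energy :: "('a::finite \<Rightarrow> 'a \<Rightarrow> real) \<Rightarrow> ('a \<Rightarrow> real) \<Rightarrow> real" where
  "dirichlet_energy c h = (\<Sum>u\<in>UNIV. \<Sum>v\<in>UNIV. c u v * (h u - h v)\<^sup>2)"

lemma net_current_eq_0_if_harmonic:
  assumes "network c" "f u = (\<Sum>v\<in>UNIV. trans_prob c u v * f v)"
  shows "net_current c f u = 0"
proof (cases "(\<Sum>w\<in>UNIV. c u w) = 0")
  \<comment> \<open>an isolated state: \<open>trans_prob\<close> divides by zero there, but its current vanishes anyway\<close>
  case True
  moreover from assms(1) have "\<forall>w. 0 \<le> c u w"
    by (simp add: network_def)
  ultimately have "c u v = 0" for v
    by (simp add: sum_nonneg_eq_0_iff)
  then show ?thesis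
    by (simp add: net_current_def)
next
  case False
  with assms(2) have "(\<Sum>w\<in>UNIV. c u w) * f u = (\<Sum>v\<in>UNIV. c u v * f v)"
    by (simp add: trans_prob_def sum_distrib_left)
  then show ?thesis
    by (simp add: net_current_def right_diff_distrib sum_subtractf sum_distrib_left mult.commute)
qed

lemma sum_net_current_eq_0:
  assumes "\<And>u v. c u v = c v u"
  shows "(\<Sum>u\<in>UNIV. net_current c h u) = 0"
proof -
  have "(\<Sum>u\<in>UNIV. net_current c h u) = (\<Sum>u\<in>UNIV. \<Sum>v\<in>UNIV. c v u * (h v - h u))"
    unfolding net_current_def by (rule sum.swap)
  also have "\<dots> = - (\<Sum>u\<in>UNIV. net_current c h u)"
    by (simp add: net_current_def assms algebra_simps flip: sum_negf)
  finally show ?thesis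
    by simp
qed

lemma dirichlet_energy_eq_sum_net_current:
  assumes "\<And>u v. c u v = c v u"
  shows "dirichlet_energy c h = 2 * (\<Sum>u\<in>UNIV. h u * net_current c h u)"
proof -
  let ?A = "\<Sum>u\<in>UNIV. \<Sum>v\<in>UNIV. c u v * (h u - h v) * h u"
  have "dirichlet_energy c h = ?A + (\<Sum>u\<in>UNIV. \<Sum>v\<in>UNIV. c u v * (h v - h u) * h v)"
    unfolding dirichlet_energy_def
    by (simp add: power2_eq_square algebra_simps flip: sum.distrib)
  also have "(\<Sum>u\<in>UNIV. \<Sum>v\<in>UNIV. c u v * (h v - h u) * h v) = ?A"
    by (subst sum.swap) (simp add: assms)
  finally show ?thesis
    by (simp add: net_current_def sum_distrib_left algebra_simps)
qed

lemma dirichlet_energy_harmonic: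
  assumes "\<And>u v. c u v = c v u" "a \<noteq> z" "h a = 1" "h z = 0"
    and "\<And>u. u \<noteq> a \<Longrightarrow> u \<noteq> z \<Longrightarrow> net_current c h u = 0"
  shows "dirichlet_energy c h = 2 * (\<Sum>v\<in>UNIV. c z v * h v)"
proof -
  have "(\<Sum>u\<in>UNIV. net_current c h u) = (\<Sum>u\<in>{a, z}. net_current c h u)"
    using assms(5) by (intro sum.mono_neutral_right) auto
  moreover have "(\<Sum>u\<in>UNIV. h u * net_current c h u) = (\<Sum>u\<in>{a, z}. h u * net_current c h u)"
    using assms(5) by (intro sum.mono_neutral_right) auto
  ultimately have "net_current c h a + net_current c h z = 0"
    "dirichlet_energy c h = 2 * net_current c h a"
    using assms(1-4) sum_net_current_eq_0[of c h] dirichlet_energy_eq_sum_net_current[of c h]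
    by simp_all
  then show ?thesis
    using assms(4) by (simp add: net_current_def sum_negf)
qed

lemma dirichlet_energy_ge_edge_sum:
  assumes "\<And>u v. c u v = c v u" "\<And>u v. 0 \<le> c u v" "\<And>u v. (u, v) \<in> S \<Longrightarrow> (v, u) \<notin> S"
  shows "2 * (\<Sum>(u, v)\<in>S. c u v * (h u - h v)\<^sup>2) \<le> dirichlet_energy c h"
proof -
  let ?g = "\<lambda>(u, v). c u v * (h u - h v)\<^sup>2"
  have "(\<Sum>p\<in>prod.swap ` S. ?g p) = (\<Sum>p\<in>S. ?g p)"
    by (simp add: sum.reindex assms(1) power2_commute case_prod_beta)
  then have "2 * (\<Sum>p\<in>S. ?g p) = (\<Sum>p\<in>S \<union> prod.swap ` S. ?g p)"
    using assms(3) by (subst sum.union_disjoint) auto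
  also have "\<dots> \<le> (\<Sum>p\<in>UNIV. ?g p)"
    using assms(2) by (intro sum_mono2) auto
  also have "\<dots> = dirichlet_energy c h"
    by (simp add: dirichlet_energy_def sum.cartesian_product)
  finally show ?thesis .
qed

section \<open>Energy along a path\<close>

lemma obtain_inj_path:
  assumes "xs 0 = x" "xs k = y" "\<And>i. i < k \<Longrightarrow> R (xs i) (xs (Suc i))"
  obtains k' ys where "k' \<le> k" "ys 0 = x" "ys k' = y"
    "\<And>i. i < k' \<Longrightarrow> R (ys i) (ys (Suc i))" "inj_on ys {..k'}"
  using assms
proof (induction k arbitrary: xs rule: less_induct)
  case (less k)
  show ?case
  proof (cases "inj_on xs {..k}")
    case True
    with less.prems show ?thesis by blast
  next
    case False
    then obtain i j where ij: "i < j" "j \<le> k" "xs i = xs j"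
      unfolding inj_on_def by (metis atMost_iff linorder_neqE_nat)
    define ys where "ys m = (if m \<le> i then xs m else xs (m + (j - i)))" for m
    have "k - (j - i) \<le> i \<longleftrightarrow> j = k"
      using ij by auto
    with ij less.prems(2,3) have ends: "ys 0 = x" "ys (k - (j - i)) = y"
      by (auto simp: ys_def)
    have edges: "R (ys m) (ys (Suc m))" if "m < k - (j - i)" for m
    proof -
      consider "Suc m \<le> i" | "m = i" | "i < m" by linarith
      then show ?thesis
      proof cases
        case 1
        then show ?thesis using less.prems(4)[of m] ij by (simp add: ys_def)
      next
        case 2
        then show ?thesis using less.prems(4)[of j] ij that by (simp add: ys_def)
      next
        case 3
        then show ?thesis using less.prems(4)[of "m + (j - i)"] ij that by (simp add: ys_def)
      qed
    qed
    have "k - (j - i) < k"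
      using ij by simp
    from less.IH[of "k - (j - i)" ys, OF this _ ends edges] show ?thesis
      using less.prems(1) by (meson diff_le_self le_trans)
  qed
qed

lemma inj_path_avoids_pendant:
  fixes c :: "'a \<Rightarrow> 'a \<Rightarrow> real"
  assumes "\<And>u v. c u v = c v u" "\<And>u. u \<notin> {x, z} \<Longrightarrow> c u z = 0" "x \<noteq> z"
    and "xs 0 = x" "xs k \<noteq> z" "\<And>i. i < k \<Longrightarrow> 0 < c (xs i) (xs (Suc i))"
    and "inj_on xs {..k}" "i \<le> k"
  shows "xs i \<noteq> z"
proof
  assume xi: "xs i = z"
  with assms(3-5,8) have "0 < i" "i < k"
    by (auto intro: Nat.gr0I simp: le_less)
  with assms(1,6) xi have "0 < c (xs (Suc i)) z"
    by metis
  with assms(2,4) xi have "xs (Suc i) \<in> {xs 0, xs i}"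
    by fastforce
  with \<open>0 < i\<close> \<open>i < k\<close> show False
    using inj_onD[OF assms(7)] by fastforce
qed

lemma dirichlet_energy_ge_path:
  assumes "\<And>u v. c u v = c v u" "\<And>u v. 0 \<le> c u v" "x \<noteq> z"
    and "xs 0 = x" "inj_on xs {..k}" "\<And>i. i \<le> k \<Longrightarrow> xs i \<noteq> z"
  shows "2 * (c x z * (h x - h z)\<^sup>2 + (\<Sum>i<k. c (xs i) (xs (Suc i)) * (h (xs i) - h (xs (Suc i)))\<^sup>2))
    \<le> dirichlet_energy c h"
proof -
  let ?e = "\<lambda>i. (xs i, xs (Suc i))"
  let ?S = "insert (x, z) (?e ` {..<k})"
  have avoids: "xs i \<noteq> z" "xs (Suc i) \<noteq> z" if "i < k" for i
    using assms(6) that by simp_all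
  have no_reversal: "(xs (Suc i), xs i) \<noteq> (xs j, xs (Suc j))" if "i < k" "j < k" for i j
  proof
    assume "(xs (Suc i), xs i) = (xs j, xs (Suc j))"
    with assms(5) that have "Suc i = j" "i = Suc j"
      by (auto dest: inj_onD)
    then show False by simp
  qed
  have one_orientation: "(v, u) \<notin> ?S" if "(u, v) \<in> ?S" for u v
    using that assms(3) avoids no_reversal by auto
  have "2 * (\<Sum>(u, v)\<in>?S. c u v * (h u - h v)\<^sup>2) \<le> dirichlet_energy c h"
    using assms(1,2) one_orientation by (rule dirichlet_energy_ge_edge_sum)
  moreover have "(\<Sum>(u, v)\<in>?S. c u v * (h u - h v)\<^sup>2) =
      c x z * (h x - h z)\<^sup>2 + (\<Sum>i<k. c (xs i) (xs (Suc i)) * (h (xs i) - h (xs (Suc i)))\<^sup>2)"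
  proof -
    have "inj_on ?e {..<k}"
      using assms(5) by (auto simp: inj_on_def)
    moreover have "(x, z) \<notin> ?e ` {..<k}"
      using avoids by auto
    ultimately show ?thesis
      by (simp add: sum.reindex)
  qed
  ultimately show ?thesis
    by simp
qed

lemma dirichlet_energy_hit_before:
  fixes c :: "'a::finite \<Rightarrow> 'a \<Rightarrow> real"
  assumes net: "network c" and "a \<noteq> z" and pendant: "\<And>u. u \<notin> {x, z} \<Longrightarrow> c u z = 0"
  shows "dirichlet_energy c (\<lambda>u. hit_before c u a z) = 2 * (c x z * hit_before c x a z)"
proof -
  define h where "h u = hit_before c u a z" for u
  from net have sym: "\<And>u v. c u v = c v u"
    by (simp add: network_def)
  have ha: "h a = 1" and hz: "h z = 0"
    using hit_before_first_step[OF net \<open>a \<noteq> z\<close>] by (simp_all add: h_def not_sym[OF \<open>a \<noteq> z\<close>])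
  have "net_current c h u = 0" if "u \<noteq> a" "u \<noteq> z" for u
    using that hit_before_first_step[OF net \<open>a \<noteq> z\<close>, of u]
    by (intro net_current_eq_0_if_harmonic[OF net]) (simp add: h_def)
  with sym \<open>a \<noteq> z\<close> ha hz have "dirichlet_energy c h = 2 * (\<Sum>v\<in>UNIV. c z v * h v)"
    by (intro dirichlet_energy_harmonic) auto
  also have "(\<Sum>v\<in>UNIV. c z v * h v) = (\<Sum>v\<in>{x}. c z v * h v)"
    using pendant sym hz by (intro sum.mono_neutral_right) auto
  finally show ?thesis
    by (simp add: h_def sym)
qed

lemma square_telescope_le:
  fixes f :: "nat \<Rightarrow> real"
  shows "(f k - f 0)\<^sup>2 \<le> real k * (\<Sum>i<k. (f (Suc i) - f i)\<^sup>2)"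
  using sum_squared_le_sum_of_squares[of "\<lambda>i. f (Suc i) - f i" "{..<k}"]
  by (simp add: sum_lessThan_telescope mult.commute)

lemma ge_inverse_if_quadratic_le:
  fixes y t :: real
  assumes "0 \<le> t" "y \<le> 1" "(1 - y)\<^sup>2 \<le> t * y * (1 - y)"
  shows "1 / (t + 1) \<le> y"
proof (cases "y = 1")
  case True
  with assms(1) show ?thesis by simp
next
  case False
  with assms(2,3) have "1 - y \<le> t * y"
    by (simp add: power2_eq_square)
  with assms(1) show ?thesis
    by (simp add: divide_le_eq algebra_simps)
qed

lemma hit_before_ge_inj_path:
  fixes c :: "'a::finite \<Rightarrow> 'a \<Rightarrow> real"
  assumes net: "network c" and "x \<noteq> z" "a \<noteq> z" "0 < c x z"
    and pendant: "\<And>u. u \<notin> {x, z} \<Longrightarrow> c u z = 0"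
    and "xs 0 = x" "xs k = a" "0 < \<rho>"
    and edges: "\<And>i. i < k \<Longrightarrow> c x z / \<rho> \<le> c (xs i) (xs (Suc i))"
    and "inj_on xs {..k}"
  shows "1 / (real k * \<rho> + 1) \<le> hit_before c x a z"
proof -
  define h where "h u = hit_before c u a z" for u
  from net have sym: "\<And>u v. c u v = c v u" and nonneg: "\<And>u v. 0 \<le> c u v"
    by (simp_all add: network_def)
  have ha: "h a = 1" and hz: "h z = 0"
    using hit_before_first_step[OF net \<open>a \<noteq> z\<close>] by (simp_all add: h_def not_sym[OF \<open>a \<noteq> z\<close>])
  have energy: "dirichlet_energy c h = 2 * (c x z * h x)"
    unfolding h_def using net \<open>a \<noteq> z\<close> pendant by (rule dirichlet_energy_hit_before)
  have "0 < c (xs i) (xs (Suc i))" if "i < k" for i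
    using edges[OF that] \<open>0 < c x z\<close> \<open>0 < \<rho>\<close> by (meson divide_pos_pos less_le_trans)
  moreover have "xs k \<noteq> z"
    using \<open>xs k = a\<close> \<open>a \<noteq> z\<close> by simp
  ultimately have "xs i \<noteq> z" if "i \<le> k" for i
    using sym pendant \<open>x \<noteq> z\<close> \<open>xs 0 = x\<close> \<open>inj_on xs {..k}\<close> that
    by (intro inj_path_avoids_pendant)
  with sym nonneg \<open>x \<noteq> z\<close> \<open>xs 0 = x\<close> \<open>inj_on xs {..k}\<close>
  have path_energy: "2 * (c x z * (h x - h z)\<^sup>2
      + (\<Sum>i<k. c (xs i) (xs (Suc i)) * (h (xs i) - h (xs (Suc i)))\<^sup>2)) \<le> dirichlet_energy c h"
    by (intro dirichlet_energy_ge_path)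
  define D where "D = (\<Sum>i<k. (h (xs i) - h (xs (Suc i)))\<^sup>2)"
  have "c x z / \<rho> * D \<le> (\<Sum>i<k. c (xs i) (xs (Suc i)) * (h (xs i) - h (xs (Suc i)))\<^sup>2)"
    unfolding D_def sum_distrib_left
    by (intro sum_mono mult_right_mono) (simp_all add: edges)
  with energy path_energy hz have "c x z * ((h x)\<^sup>2 + D / \<rho>) \<le> c x z * h x"
    by (simp add: algebra_simps)
  with \<open>0 < c x z\<close> have "(h x)\<^sup>2 + D / \<rho> \<le> h x"
    by simp
  with \<open>0 < \<rho>\<close> have "D \<le> \<rho> * h x * (1 - h x)"
    by (simp add: field_simps power2_eq_square)
  moreover have "(1 - h x)\<^sup>2 \<le> real k * D"
    using square_telescope_le[of "\<lambda>i. h (xs i)" k] \<open>xs 0 = x\<close> \<open>xs k = a\<close> ha by (simp add: D_def power2_commute)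
  ultimately have "(1 - h x)\<^sup>2 \<le> real k * \<rho> * h x * (1 - h x)"
    by (metis mult.assoc mult_left_mono of_nat_0_le_iff order_trans)
  moreover have "h x \<le> 1"
    using hit_before_le_1[OF net \<open>a \<noteq> z\<close>] by (simp add: h_def)
  ultimately have "1 / (real k * \<rho> + 1) \<le> h x"
    using \<open>0 < \<rho>\<close> by (intro ge_inverse_if_quadratic_le) simp_all
  then show ?thesis
    by (simp add: h_def)
qed

theorem lemmaC5:
  fixes c :: "'a::finite \<Rightarrow> 'a \<Rightarrow> real"
    and a x z :: 'a and xs :: "nat \<Rightarrow> 'a" and k :: nat and \<rho> :: real
  assumes "network c"
    and "x \<noteq> z" and "a \<noteq> z"
    and "c x z > 0"
    and "\<And>u. u \<notin> {x, z} \<Longrightarrow> c u z = 0"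
    and "xs 0 = x" and "xs k = a"
    and "\<rho> > 0"
    and "\<And>i. 1 \<le> i \<Longrightarrow> i \<le> k \<Longrightarrow> c (xs (i - 1)) (xs i) \<ge> c x z / \<rho>"
  shows "hit_before c x a z \<ge> 1 / (real k * \<rho> + 1)"
proof -
  have "c x z / \<rho> \<le> c (xs i) (xs (Suc i))" if "i < k" for i
    using assms(9)[of "Suc i"] that by simp
  then obtain k' ys where "k' \<le> k" "ys 0 = x" "ys k' = a"
    "\<And>i. i < k' \<Longrightarrow> c x z / \<rho> \<le> c (ys i) (ys (Suc i))" "inj_on ys {..k'}"
    using obtain_inj_path[of xs x k a "\<lambda>u v. c x z / \<rho> \<le> c u v"] assms(6,7) by blast
  with assms(1-5,8) have "1 / (real k' * \<rho> + 1) \<le> hit_before c x a z"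
    by (intro hit_before_ge_inj_path)
  moreover have "1 / (real k * \<rho> + 1) \<le> 1 / (real k' * \<rho> + 1)"
    using \<open>k' \<le> k\<close> \<open>0 < \<rho>\<close> by (intro frac_le) (auto intro: mult_right_mono add_nonneg_pos)
  ultimately show ?thesis
    by simp
qed

end
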